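(* Let $r$ be an integer with $\gcd(r,6)=1$, $0<r<24$, and $s$ an even nonnegative integer. Let $\mathcal S_{r,s}(1)$ be the space of holomorphic functions $g$ on the upper half-plane $\mathbb H$ satisfying $$g(\gamma\tau)=(c\tau+d)^s\frac{\eta(\gamma\tau)^r}{\eta(\tau)^r}\,g(\tau)\quad\text{for all }\gamma=\begin{pmatrix}a&b\\c&d\end{pmatrix}\in\mathrm{SL}(2,\mathbb Z),$$ which are holomorphic and vanish at the cusp. Then $$\mathcal S_{r,s}(1)=\{\eta(\tau)^rf(\tau):\ f\in M_s(1)\},$$ where $M_s(1)$ is the space of modular forms of weight $s$ on $\mathrm{SL}(2,\mathbb Z)$.
   Context: $\eta(\tau)=e^{2\pi i\tau/24}\prod_{m\ge1}(1-e^{2\pi im\tau})$ is the Dedekind eta function; for $\gamma\in\mathrm{SL}(2,\mathbb Z)$, $\eta(\gamma\tau)^r/\eta(\tau)^r$ means $(\eta(\gamma\tau)/\eta(\tau))^r$, a holomorphic function of $\tau$. *)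

theory Defs
  imports "HOL-Complex_Analysis.Complex_Analysis"
begin

definition uhp :: "complex set" where
  "uhp = {\<tau>. Im \<tau> > 0}"

definition dedekind_eta :: "complex \<Rightarrow> complex" where
  "dedekind_eta \<tau> = exp (2 * pi * \<i> * \<tau> / 24) *
     (\<Prod>m. (1 - exp (2 * pi * \<i> * of_nat (Suc m) * \<tau>)))"

definition moebius :: "int \<Rightarrow> int \<Rightarrow> int \<Rightarrow> int \<Rightarrow> complex \<Rightarrow> complex" where
  "moebius a b c d \<tau> = (of_int a * \<tau> + of_int b) / (of_int c * \<tau> + of_int d)"

definition holomorphic_at_cusp :: "(complex \<Rightarrow> complex) \<Rightarrow> bool" where
  "holomorphic_at_cusp f \<longleftrightarrow> (\<exists>M Y. \<forall>\<tau>. Im \<tau> > Y \<longrightarrow> norm (f \<tau>) \<le> M)"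

definition vanishes_at_cusp :: "(complex \<Rightarrow> complex) \<Rightarrow> bool" where
  "vanishes_at_cusp f \<longleftrightarrow> (\<forall>\<epsilon>>0. \<exists>Y. \<forall>\<tau>. Im \<tau> > Y \<longrightarrow> norm (f \<tau>) < \<epsilon>)"

definition modular_form :: "nat \<Rightarrow> (complex \<Rightarrow> complex) \<Rightarrow> bool" where
  "modular_form s f \<longleftrightarrow>
     f holomorphic_on uhp \<and>
     (\<forall>a b c d. a * d - b * c = 1 \<longrightarrow>
        (\<forall>\<tau>\<in>uhp. f (moebius a b c d \<tau>) = (of_int c * \<tau> + of_int d) ^ s * f \<tau>)) \<and>
     holomorphic_at_cusp f"

definition eta_cusp_form :: "nat \<Rightarrow> nat \<Rightarrow> (complex \<Rightarrow> complex) \<Rightarrow> bool" where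
  "eta_cusp_form r s g \<longleftrightarrow>
     g holomorphic_on uhp \<and>
     (\<forall>a b c d. a * d - b * c = 1 \<longrightarrow>
        (\<forall>\<tau>\<in>uhp. g (moebius a b c d \<tau>) =
            (of_int c * \<tau> + of_int d) ^ s *
            (dedekind_eta (moebius a b c d \<tau>) / dedekind_eta \<tau>) ^ r * g \<tau>)) \<and>
     holomorphic_at_cusp g \<and> vanishes_at_cusp g"

end

theory Submission
  imports Defs "HOL-Real_Asymp.Real_Asymp"
begin

text \<open>Since \<open>\<eta>\<close> has no zeros in the upper half-plane, \<open>g \<mapsto> g / \<eta>^r\<close> turns the
  \<open>\<eta>^r\<close>-twisted transformation law into the weight \<open>s\<close> law and back, so only the cusp needs
  an argument. Write \<open>q = exp (2\<pi>i\<tau>)\<close>; then \<open>\<eta>(\<tau>) = exp (2\<pi>i\<tau>/24) \<phi>(q)\<close> with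
  \<open>\<phi>(q) = \<Prod>(1 - q^m) \<rightarrow> 1\<close>, so \<open>\<eta>^r f\<close> vanishes at the cusp whenever \<open>f\<close> is bounded there.
  Conversely \<open>f = g / \<eta>^r\<close> is 1-periodic, hence \<open>f(\<tau>) = G(q)\<close> with \<open>G\<close> holomorphic on the
  punctured unit disc; as \<open>g\<close> is bounded and \<open>r < 24\<close>, \<open>q G(q) = O(|q|^(1 - r/24)) \<rightarrow> 0\<close>,
  so the singularity of \<open>G\<close> at \<open>0\<close> is removable and \<open>f\<close> tends to \<open>G(0)\<close> at the cusp.\<close>

definition at_cusp :: "complex filter" where
  "at_cusp = filtercomap Im at_top"

lemma eventually_at_cusp: "eventually P at_cusp \<longleftrightarrow> (\<exists>Y. \<forall>\<tau>. Im \<tau> > Y \<longrightarrow> P \<tau>)"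
  by (simp add: at_cusp_def eventually_filtercomap_at_top_dense)

lemma filterlim_Im_at_cusp: "filterlim Im at_top at_cusp"
  by (simp add: at_cusp_def filterlim_filtercomap)

lemma eventually_in_uhp_at_cusp: "eventually (\<lambda>\<tau>. \<tau> \<in> uhp) at_cusp"
  unfolding eventually_at_cusp uhp_def by (intro exI[of _ 0]) simp

lemma holomorphic_at_cusp_iff_Bfun: "holomorphic_at_cusp f \<longleftrightarrow> Bfun f at_cusp"
proof
  assume "holomorphic_at_cusp f"
  then obtain M Y where "\<forall>\<tau>. Im \<tau> > Y \<longrightarrow> norm (f \<tau>) \<le> M"
    unfolding holomorphic_at_cusp_def by blast
  then have "eventually (\<lambda>\<tau>. norm (f \<tau>) \<le> max M 1) at_cusp"
    unfolding eventually_at_cusp by force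
  then show "Bfun f at_cusp"
    by (intro BfunI)
next
  assume "Bfun f at_cusp"
  then show "holomorphic_at_cusp f"
    unfolding Bfun_def eventually_at_cusp holomorphic_at_cusp_def by blast
qed

lemma vanishes_at_cusp_iff_tendsto: "vanishes_at_cusp f \<longleftrightarrow> (f \<longlongrightarrow> 0) at_cusp"
  by (simp add: vanishes_at_cusp_def tendsto_iff eventually_at_cusp)

lemma tendsto_imp_Bfun:
  fixes f :: "'a \<Rightarrow> 'b::metric_space"
  assumes "(f \<longlongrightarrow> c) F"
  shows "Bfun f F"
  unfolding Bfun_metric_def
  using tendstoD[OF assms zero_less_one] by (intro exI[of _ c] exI[of _ 1]) (auto elim: eventually_mono)

lemma Bfun_mult_tendsto_zero:
  fixes f g :: "'a \<Rightarrow> 'b::real_normed_algebra"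
  assumes "Bfun f F" and "(g \<longlongrightarrow> 0) F"
  shows "((\<lambda>x. f x * g x) \<longlongrightarrow> 0) F"
  using bounded_bilinear.Bfun_prod_Zfun[OF bounded_bilinear_mult assms(1)] assms(2)
  by (simp add: tendsto_Zfun_iff)

lemma tendsto_exp_at_cusp:
  assumes "c > 0"
  shows "((\<lambda>\<tau>. exp (2 * pi * \<i> * of_real c * \<tau>)) \<longlongrightarrow> 0) at_cusp"
proof -
  have "((\<lambda>y. exp (- 2 * pi * c * y)) \<longlongrightarrow> 0) at_top"
    using assms by real_asymp
  then have "((\<lambda>\<tau>. exp (- 2 * pi * c * Im \<tau>)) \<longlongrightarrow> 0) at_cusp"
    by (rule filterlim_compose[OF _ filterlim_Im_at_cusp])
  then show ?thesis
    by (subst tendsto_norm_zero_iff[symmetric]) simp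
qed

definition euler_function :: "complex \<Rightarrow> complex" where
  "euler_function w = (\<Prod>m. 1 - w ^ Suc m)"

lemma abs_convergent_prod_euler_function:
  fixes w :: complex
  assumes "norm w < 1"
  shows "abs_convergent_prod (\<lambda>m. 1 - w ^ Suc m)"
proof (rule summable_imp_abs_convergent_prod)
  have "summable (\<lambda>m. norm w ^ Suc m)"
    using assms by (simp add: summable_geometric)
  then show "summable (\<lambda>m. norm ((1 - w ^ Suc m) - 1))"
    by (simp add: norm_power del: power_Suc)
qed

lemma euler_function_factor_nonzero:
  fixes w :: complex
  assumes "norm w < 1"
  shows "1 - w ^ Suc m \<noteq> 0"
proof
  assume "1 - w ^ Suc m = 0"
  then have "norm w ^ Suc m = 1"
    by (metis eq_iff_diff_eq_0 norm_one norm_power)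
  moreover have "norm w ^ Suc m < 1"
    using assms by (simp add: power_less_one_iff del: power_Suc)
  ultimately show False by simp
qed

lemma euler_function_nonzero: "norm w < 1 \<Longrightarrow> euler_function w \<noteq> 0"
  unfolding euler_function_def
  by (intro prodinf_nonzero abs_convergent_prod_imp_convergent_prod
      abs_convergent_prod_euler_function euler_function_factor_nonzero)

lemma uniform_limit_euler_function:
  assumes "0 \<le> R" and "R < 1"
  shows "uniform_limit (cball 0 R) (\<lambda>N w. \<Prod>m<N. 1 - w ^ Suc m) euler_function sequentially"
proof -
  have "uniformly_convergent_on (cball (0::complex) R) (\<lambda>N w. \<Prod>m<N. 1 - w ^ Suc m)"
  proof (rule uniformly_convergent_on_prod'[where f = "\<lambda>m w. 1 - w ^ Suc m"])
    show "uniformly_convergent_on (cball (0::complex) R) (\<lambda>N w. \<Sum>m<N. norm ((1 - w ^ Suc m) - 1))"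
    proof (rule Weierstrass_m_test'_ev)
      show "\<forall>\<^sub>F m in sequentially. \<forall>w\<in>cball (0::complex) R. norm (norm ((1 - w ^ Suc m) - 1)) \<le> R ^ Suc m"
        by (intro always_eventually allI ballI)
           (auto simp: norm_power simp del: power_Suc intro!: power_mono)
      show "summable (\<lambda>m. R ^ Suc m)"
        using assms by (simp add: summable_geometric)
    qed
  qed (auto intro!: continuous_intros)
  then have "uniform_limit (cball (0::complex) R) (\<lambda>N w. \<Prod>m<N. 1 - w ^ Suc m)
               (\<lambda>w. lim (\<lambda>N. \<Prod>m<N. 1 - w ^ Suc m)) sequentially"
    by (simp only: uniformly_convergent_uniform_limit_iff)
  moreover have "uniform_limit (cball (0::complex) R) (\<lambda>N w. \<Prod>m<N. 1 - w ^ Suc m)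
      (\<lambda>w. lim (\<lambda>N. \<Prod>m<N. 1 - w ^ Suc m)) sequentially \<longleftrightarrow> ?thesis"
  proof (rule uniform_limit_cong')
    fix w :: complex
    assume "w \<in> cball 0 R"
    then have "norm w < 1"
      using assms by simp
    then show "lim (\<lambda>N. \<Prod>m<N. 1 - w ^ Suc m) = euler_function w"
      unfolding euler_function_def
      by (metis prodinf_eq_lim' abs_convergent_prod_imp_convergent_prod
          abs_convergent_prod_euler_function euler_function_factor_nonzero)
  qed simp
  ultimately show ?thesis
    by blast
qed

lemma holomorphic_euler_function: "euler_function holomorphic_on ball 0 1"
proof (rule holomorphic_uniform_sequence)
  fix w :: complex
  assume "w \<in> ball 0 1"
  moreover have "norm t \<le> norm w + norm (t - w)" for t :: complex
    using norm_triangle_ineq2[of t w] by simp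
  ultimately have "cball w ((1 - norm w) / 2) \<subseteq> cball 0 ((1 + norm w) / 2)"
    and "cball w ((1 - norm w) / 2) \<subseteq> ball 0 1" and "(1 + norm w) / 2 < 1" and "0 < (1 - norm w) / 2"
    by (auto simp: subset_iff dist_norm norm_minus_commute)
       (smt (verit, best))+
  then show "\<exists>d>0. cball w d \<subseteq> ball 0 1 \<and>
      uniform_limit (cball w d) (\<lambda>N w. \<Prod>m<N. 1 - w ^ Suc m) euler_function sequentially"
    by (intro exI[of _ "(1 - norm w) / 2"] conjI
        uniform_limit_on_subset[OF uniform_limit_euler_function]) auto
qed (auto intro!: holomorphic_intros)

lemma euler_function_0 [simp]: "euler_function 0 = 1"
  by (simp add: euler_function_def)

lemma tendsto_euler_function_0: "(euler_function \<longlongrightarrow> 1) (at 0)"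
proof -
  have "isCont euler_function 0"
    using holomorphic_euler_function
    by (intro continuous_on_interior[OF holomorphic_on_imp_continuous_on]) auto
  then show ?thesis
    by (simp add: isCont_def)
qed

definition nome :: "complex \<Rightarrow> complex" where
  "nome \<tau> = exp (2 * pi * \<i> * \<tau>)"

lemma norm_nome: "norm (nome \<tau>) = exp (- 2 * pi * Im \<tau>)"
  by (simp add: nome_def)

lemma nome_nonzero [simp]: "nome \<tau> \<noteq> 0"
  by (simp add: nome_def)

lemma norm_nome_less_1_iff: "norm (nome \<tau>) < 1 \<longleftrightarrow> \<tau> \<in> uhp"
  by (simp add: norm_nome uhp_def zero_less_mult_iff)

lemma tendsto_nome_at_cusp: "(nome \<longlongrightarrow> 0) at_cusp"
  using tendsto_exp_at_cusp[of 1] by (simp add: nome_def[abs_def])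

lemma tendsto_euler_function_nome_at_cusp: "((\<lambda>\<tau>. euler_function (nome \<tau>)) \<longlongrightarrow> 1) at_cusp"
  by (rule filterlim_compose[OF tendsto_euler_function_0])
     (simp add: filterlim_at tendsto_nome_at_cusp)

lemma dedekind_eta_eq: "dedekind_eta \<tau> = exp (2 * pi * \<i> * \<tau> / 24) * euler_function (nome \<tau>)"
proof -
  have "exp (2 * pi * \<i> * of_nat (Suc m) * \<tau>) = nome \<tau> ^ Suc m" for m
    unfolding nome_def exp_of_nat_mult[symmetric] by (simp add: mult_ac)
  then show ?thesis
    by (simp add: dedekind_eta_def euler_function_def del: power_Suc of_nat_Suc)
qed

lemma dedekind_eta_nonzero: "\<tau> \<in> uhp \<Longrightarrow> dedekind_eta \<tau> \<noteq> 0"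
  by (simp add: dedekind_eta_eq euler_function_nonzero norm_nome_less_1_iff)

lemma holomorphic_dedekind_eta: "dedekind_eta holomorphic_on uhp"
proof -
  have "nome holomorphic_on uhp"
    unfolding nome_def[abs_def] by (intro holomorphic_intros)
  then have "(\<lambda>\<tau>. euler_function (nome \<tau>)) holomorphic_on uhp"
    using holomorphic_on_compose_gen[OF _ holomorphic_euler_function, of nome uhp]
    by (auto simp: o_def norm_nome_less_1_iff image_subset_iff)
  then show ?thesis
    unfolding dedekind_eta_eq[abs_def] by (intro holomorphic_intros) auto
qed

lemma tendsto_dedekind_eta_at_cusp: "(dedekind_eta \<longlongrightarrow> 0) at_cusp"
proof -
  have "((\<lambda>\<tau>. exp (2 * pi * \<i> * of_real (1/24) * \<tau>) * euler_function (nome \<tau>)) \<longlongrightarrow> 0 * 1) at_cusp"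
    by (intro tendsto_mult tendsto_exp_at_cusp tendsto_euler_function_nome_at_cusp) simp
  then show ?thesis
    by (simp add: dedekind_eta_eq[abs_def] mult_ac)
qed

lemma moebius_in_uhp:
  assumes "a * d - b * c = 1" and "\<tau> \<in> uhp"
  shows "moebius a b c d \<tau> \<in> uhp"
proof -
  have "Im \<tau> > 0"
    using assms(2) by (simp add: uhp_def)
  then have "of_int c * \<tau> + of_int d \<noteq> 0"
    using assms(1) by (auto simp: complex_eq_iff)
  moreover have "Im (moebius a b c d \<tau>) = of_int (a * d - b * c) * Im \<tau> / (norm (of_int c * \<tau> + of_int d))\<^sup>2"
    by (simp add: moebius_def Im_divide' algebra_simps)
  ultimately show ?thesis
    using assms \<open>Im \<tau> > 0\<close> by (simp add: uhp_def)
qed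

lemma moebius_translation: "moebius 1 n 0 1 \<tau> = \<tau> + of_int n"
  by (simp add: moebius_def)

lemma nome_divide_2_pi_i: "nome (z / (2 * pi * \<i>)) = exp z"
  by (simp add: nome_def)

lemma filterlim_Ln_at_cusp: "filterlim (\<lambda>w. Ln w / (2 * pi * \<i>)) at_cusp (at 0)"
proof -
  have "filterlim norm (at_right 0) (at (0::complex))"
    by (intro tendsto_imp_filterlim_at_right tendsto_norm_zero tendsto_ident_at)
       (auto simp: eventually_at_filter)
  moreover have "filterlim (\<lambda>x::real. - ln x / (2 * pi)) at_top (at_right 0)"
    by real_asymp
  ultimately have "filterlim (\<lambda>w. - ln (norm w) / (2 * pi)) at_top (at (0::complex))"
    by (rule filterlim_compose[rotated])
  moreover have "\<forall>\<^sub>F w in at 0. - ln (norm w) / (2 * pi) = Im (Ln w / (2 * pi * \<i>))"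
    by (auto simp: eventually_at_filter Im_divide power2_eq_square)
  ultimately show ?thesis
    by (simp add: at_cusp_def filterlim_filtercomap_iff o_def filterlim_cong)
qed

lemma periodic_holomorphic_tendsto_at_cusp:
  assumes holo: "F holomorphic_on uhp"
    and periodic: "\<And>\<tau> n. \<tau> \<in> uhp \<Longrightarrow> F (\<tau> + of_int n) = F \<tau>"
    and growth: "((\<lambda>\<tau>. nome \<tau> * F \<tau>) \<longlongrightarrow> 0) at_cusp"
  obtains c where "(F \<longlongrightarrow> c) at_cusp"
proof -
  define G where "G w = F (Ln w / (2 * pi * \<i>))" for w
  have G_nome: "G (nome \<tau>) = F \<tau>" if "\<tau> \<in> uhp" for \<tau>
  proof -
    have "exp (Ln (nome \<tau>)) = exp (2 * pi * \<i> * \<tau>)"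
      by (simp add: nome_def)
    then obtain n :: int where "Ln (nome \<tau>) = 2 * pi * \<i> * \<tau> + of_int (2 * n) * pi * \<i>"
      unfolding exp_eq by blast
    then have "Ln (nome \<tau>) / (2 * pi * \<i>) = \<tau> + of_int n"
      by (simp add: field_simps)
    then show ?thesis
      using periodic[OF that] by (simp add: G_def)
  qed
  have "G analytic_on {w0}" if w0: "w0 \<in> ball 0 1 - {0}" for w0
  proof -
    define U where "U = ball 0 1 \<inter> (\<lambda>w. w / w0) -` (- \<real>\<^sub>\<le>\<^sub>0)"
    define L where "L w = Ln (w / w0) + Ln w0" for w
    \<comment> \<open>a branch of the logarithm on \<open>U\<close>; there \<open>G\<close> is \<open>F\<close> composed with a holomorphic map\<close>
    have "open U"
      unfolding U_def using w0 by (intro open_Int open_vimage continuous_intros) auto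
    moreover have "w0 \<in> U"
      using w0 by (simp add: U_def)
    have L_uhp: "L w / (2 * pi * \<i>) \<in> uhp" and nome_L: "nome (L w / (2 * pi * \<i>)) = w"
      if "w \<in> U" for w
    proof -
      have "w \<noteq> 0"
        using that by (auto simp: U_def)
      then show nome_L: "nome (L w / (2 * pi * \<i>)) = w"
        using w0 unfolding L_def nome_divide_2_pi_i by (simp add: exp_add)
      then show "L w / (2 * pi * \<i>) \<in> uhp"
        using that norm_nome_less_1_iff[of "L w / (2 * pi * \<i>)"] by (simp add: U_def)
    qed
    have "(\<lambda>w. F (L w / (2 * pi * \<i>))) holomorphic_on U"
    proof (rule holomorphic_on_compose_gen[OF _ holo, unfolded o_def])
      show "(\<lambda>w. L w / (2 * pi * \<i>)) holomorphic_on U"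
        unfolding L_def[abs_def] U_def using w0 by (intro holomorphic_intros) auto
    qed (use L_uhp in auto)
    then have "G holomorphic_on U"
      by (rule holomorphic_transform) (metis G_nome L_uhp nome_L)
    with \<open>open U\<close> \<open>w0 \<in> U\<close> show ?thesis
      unfolding analytic_at by blast
  qed
  then have "G holomorphic_on ball 0 1 - {0}"
    using analytic_imp_holomorphic analytic_on_analytic_at by blast
  moreover have "((\<lambda>w. (w - 0) * G w) \<longlongrightarrow> 0) (at 0)"
  proof -
    have "((\<lambda>w. nome (Ln w / (2 * pi * \<i>)) * F (Ln w / (2 * pi * \<i>))) \<longlongrightarrow> 0) (at 0)"
      by (rule filterlim_compose[OF growth filterlim_Ln_at_cusp])
    moreover have "\<forall>\<^sub>F w in at 0. nome (Ln w / (2 * pi * \<i>)) * F (Ln w / (2 * pi * \<i>)) = (w - 0) * G w"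
      unfolding G_def nome_divide_2_pi_i by (auto simp: eventually_at_filter)
    ultimately show ?thesis
      by (rule Lim_transform_eventually)
  qed
  ultimately obtain G' where G': "G' holomorphic_on ball 0 1" "\<And>w. w \<in> ball 0 1 - {0} \<Longrightarrow> G' w = G w"
    using holomorphic_on_extend_lim[of G "ball 0 1" 0] by auto
  have "isCont G' 0"
    using G'(1) by (intro continuous_on_interior[OF holomorphic_on_imp_continuous_on]) auto
  then have "((\<lambda>\<tau>. G' (nome \<tau>)) \<longlongrightarrow> G' 0) at_cusp"
    using tendsto_nome_at_cusp by (rule isCont_tendsto_compose)
  moreover have "\<forall>\<^sub>F \<tau> in at_cusp. G' (nome \<tau>) = F \<tau>"
    using eventually_in_uhp_at_cusp
  proof eventually_elim
    case (elim \<tau>)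
    then have "nome \<tau> \<in> ball 0 1 - {0}"
      by (simp add: norm_nome_less_1_iff)
    then show ?case
      using G'(2) G_nome[OF elim] by simp
  qed
  ultimately have "(F \<longlongrightarrow> G' 0) at_cusp"
    by (rule Lim_transform_eventually)
  then show ?thesis
    by (rule that)
qed

lemma eta_power_transformation_iff:
  assumes g: "\<forall>\<tau>\<in>uhp. g \<tau> = dedekind_eta \<tau> ^ r * f \<tau>"
    and det: "a * d - b * c = 1" and \<tau>: "\<tau> \<in> uhp"
  shows "g (moebius a b c d \<tau>) = (of_int c * \<tau> + of_int d) ^ s *
           (dedekind_eta (moebius a b c d \<tau>) / dedekind_eta \<tau>) ^ r * g \<tau> \<longleftrightarrow>
         f (moebius a b c d \<tau>) = (of_int c * \<tau> + of_int d) ^ s * f \<tau>"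
proof -
  have "moebius a b c d \<tau> \<in> uhp"
    using det \<tau> by (rule moebius_in_uhp)
  then show ?thesis
    using g \<tau> dedekind_eta_nonzero[OF \<tau>] dedekind_eta_nonzero[of "moebius a b c d \<tau>"]
    by (auto simp: power_divide field_simps)
qed

lemma nome_divide_dedekind_eta_power:
  "nome \<tau> / dedekind_eta \<tau> ^ r =
     exp (2 * pi * \<i> * of_real (1 - real r / 24) * \<tau>) / euler_function (nome \<tau>) ^ r"
proof -
  have "nome \<tau> / exp (2 * pi * \<i> * \<tau> / 24) ^ r = exp (2 * pi * \<i> * \<tau> - of_nat r * (2 * pi * \<i> * \<tau> / 24))"
    by (simp only: nome_def exp_diff exp_of_nat_mult)
  also have "2 * pi * \<i> * \<tau> - of_nat r * (2 * pi * \<i> * \<tau> / 24) = 2 * pi * \<i> * of_real (1 - real r / 24) * \<tau>"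
    by (simp add: field_simps)
  finally have "nome \<tau> / exp (2 * pi * \<i> * \<tau> / 24) ^ r = exp (2 * pi * \<i> * of_real (1 - real r / 24) * \<tau>)" .
  then show ?thesis
    unfolding dedekind_eta_eq power_mult_distrib divide_divide_eq_left[symmetric] by simp
qed

lemma modular_form_divide_eta_power:
  assumes "eta_cusp_form r s g" and "r < 24"
  shows "modular_form s (\<lambda>\<tau>. g \<tau> / dedekind_eta \<tau> ^ r)"
proof -
  define f where "f \<tau> = g \<tau> / dedekind_eta \<tau> ^ r" for \<tau>
  have g: "\<forall>\<tau>\<in>uhp. g \<tau> = dedekind_eta \<tau> ^ r * f \<tau>"
    by (simp add: f_def dedekind_eta_nonzero)
  have holo: "f holomorphic_on uhp"
    using assms(1) unfolding f_def eta_cusp_form_def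
    by (auto intro!: holomorphic_intros holomorphic_dedekind_eta simp: dedekind_eta_nonzero)
  have transform: "f (moebius a b c d \<tau>) = (of_int c * \<tau> + of_int d) ^ s * f \<tau>"
    if "a * d - b * c = 1" and "\<tau> \<in> uhp" for a b c d \<tau>
    using assms(1) that unfolding eta_power_transformation_iff[OF g that, symmetric]
    by (simp add: eta_cusp_form_def)
  have exponent_pos: "0 < 1 - real r / 24"
    using assms(2) by simp
  have "Bfun g at_cusp"
    using assms(1) by (simp add: eta_cusp_form_def holomorphic_at_cusp_iff_Bfun)
  moreover have "((\<lambda>\<tau>. exp (2 * pi * \<i> * of_real (1 - real r / 24) * \<tau>) / euler_function (nome \<tau>) ^ r)
               \<longlongrightarrow> 0) at_cusp"
    using tendsto_divide[OF tendsto_exp_at_cusp[OF exponent_pos]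
        tendsto_power[OF tendsto_euler_function_nome_at_cusp, of r]]
    by simp
  ultimately have "((\<lambda>\<tau>. g \<tau> * (nome \<tau> / dedekind_eta \<tau> ^ r)) \<longlongrightarrow> 0) at_cusp"
    unfolding nome_divide_dedekind_eta_power by (rule Bfun_mult_tendsto_zero)
  then have "((\<lambda>\<tau>. nome \<tau> * f \<tau>) \<longlongrightarrow> 0) at_cusp"
    by (simp add: f_def mult.commute)
  moreover have "f (\<tau> + of_int n) = f \<tau>" if "\<tau> \<in> uhp" for \<tau> n
    using transform[where a = 1 and b = n and c = 0 and d = 1] that by (simp add: moebius_translation)
  ultimately obtain c where "(f \<longlongrightarrow> c) at_cusp"
    using periodic_holomorphic_tendsto_at_cusp[OF holo] by blast
  then have "holomorphic_at_cusp f"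
    by (simp add: holomorphic_at_cusp_iff_Bfun tendsto_imp_Bfun)
  with holo transform show ?thesis
    by (simp add: modular_form_def f_def[abs_def])
qed

lemma eta_cusp_form_eta_power_mult:
  assumes f: "modular_form s f" and "0 < r"
    and g: "\<forall>\<tau>\<in>uhp. g \<tau> = dedekind_eta \<tau> ^ r * f \<tau>"
  shows "eta_cusp_form r s g"
proof -
  have "g holomorphic_on uhp"
  proof (rule holomorphic_transform)
    show "(\<lambda>\<tau>. dedekind_eta \<tau> ^ r * f \<tau>) holomorphic_on uhp"
      using f by (intro holomorphic_intros holomorphic_dedekind_eta) (simp add: modular_form_def)
  qed (use g in simp)
  moreover have "\<forall>a b c d. a * d - b * c = 1 \<longrightarrow> (\<forall>\<tau>\<in>uhp. g (moebius a b c d \<tau>) =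
      (of_int c * \<tau> + of_int d) ^ s * (dedekind_eta (moebius a b c d \<tau>) / dedekind_eta \<tau>) ^ r * g \<tau>)"
    using f eta_power_transformation_iff[OF g] by (simp add: modular_form_def)
  moreover have "(g \<longlongrightarrow> 0) at_cusp"
  proof (rule Lim_transform_eventually)
    have "Bfun f at_cusp"
      using f by (simp add: modular_form_def holomorphic_at_cusp_iff_Bfun)
    moreover have "((\<lambda>\<tau>. dedekind_eta \<tau> ^ r) \<longlongrightarrow> 0) at_cusp"
      using tendsto_power[OF tendsto_dedekind_eta_at_cusp, of r] unfolding zero_power[OF \<open>0 < r\<close>] .
    ultimately show "((\<lambda>\<tau>. f \<tau> * dedekind_eta \<tau> ^ r) \<longlongrightarrow> 0) at_cusp"
      by (rule Bfun_mult_tendsto_zero)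
    show "\<forall>\<^sub>F \<tau> in at_cusp. f \<tau> * dedekind_eta \<tau> ^ r = g \<tau>"
      using eventually_in_uhp_at_cusp by eventually_elim (simp add: g)
  qed
  ultimately show ?thesis
    by (simp add: eta_cusp_form_def holomorphic_at_cusp_iff_Bfun vanishes_at_cusp_iff_tendsto
        tendsto_imp_Bfun)
qed

theorem proposition1:
  fixes r s :: nat
  assumes "coprime r 6" and "0 < r" and "r < 24" and "even s"
  shows "eta_cusp_form r s g \<longleftrightarrow>
           (\<exists>f. modular_form s f \<and> (\<forall>\<tau>\<in>uhp. g \<tau> = dedekind_eta \<tau> ^ r * f \<tau>))"
proof
  assume "eta_cusp_form r s g"
  then have "modular_form s (\<lambda>\<tau>. g \<tau> / dedekind_eta \<tau> ^ r)"
    using \<open>r < 24\<close> by (rule modular_form_divide_eta_power)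
  then show "\<exists>f. modular_form s f \<and> (\<forall>\<tau>\<in>uhp. g \<tau> = dedekind_eta \<tau> ^ r * f \<tau>)"
    by (auto simp: dedekind_eta_nonzero)
next
  assume "\<exists>f. modular_form s f \<and> (\<forall>\<tau>\<in>uhp. g \<tau> = dedekind_eta \<tau> ^ r * f \<tau>)"
  then show "eta_cusp_form r s g"
    using \<open>0 < r\<close> eta_cusp_form_eta_power_mult by blast
qed

end
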